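(* Suppose Assumptions 1–4 hold and $p$ is convex. Let $\mathbf{x}$ be a Cournot candidate and $\mathbf{x}^S$ a social optimum. If $p(X)=p(X^S)$, then $p'(X)=0$ and $\gamma(\mathbf{x})=1$.
   Context: Cournot model: $N$ suppliers, inverse demand $p:[0,\infty)\to[0,\infty)$, supplier $n$ has cost $C_n:[0,\infty)\to[0,\infty)$ and chooses $x_n\ge0$; $X=\sum_n x_n$, $X^S=\sum_n x_n^S$. $\partial_\pm$ denote right/left derivatives; $C_n'(0)$ is the right derivative at $0$. Assumption 1: each $C_n$ is convex, continuous, nondecreasing on $[0,\infty)$, continuously differentiable on $(0,\infty)$, with $C_n(0)=0$. Assumption 2: $p$ is continuous, nonnegative, nonincreasing, $p(0)>0$; its right derivative at $0$ exists and at every $q>0$ its left and right derivatives exist. Assumption 3: there exists $R>0$ such that $p(R)\le\min_n C_n'(0)$. Assumption 4: $p(0)>\min_n C_n'(0)$. Social welfare of $\mathbf{x}\ge0$: $W(\mathbf{x})=\int_0^X p(q)\,dq-\sum_{n=1}^N C_n(x_n)$; a social optimum maximizes $W$. Efficiency: $\gamma(\mathbf{x})=W(\mathbf{x})/W(\mathbf{x}^S)$ for a social optimum $\mathbf{x}^S$. A nonnegative vector $\mathbf{x}$ is a Cournot candidate if for every $n$: $C_n'(x_n)\le p(X)+x_n\,\partial_-p(X)$ whenever $x_n>0$, and $C_n'(x_n)\ge p(X)+x_n\,\partial_+p(X)$. (For convex $p$ and $X>0$, $p$ is differentiable at $X$.) *)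

theory Defs
  imports "HOL-Analysis.Analysis"
begin

definition has_right_deriv :: "(real \<Rightarrow> real) \<Rightarrow> real \<Rightarrow> real \<Rightarrow> bool" where
  "has_right_deriv f x D \<longleftrightarrow> ((\<lambda>h. (f (x + h) - f x) / h) \<longlongrightarrow> D) (at_right 0)"

definition has_left_deriv :: "(real \<Rightarrow> real) \<Rightarrow> real \<Rightarrow> real \<Rightarrow> bool" where
  "has_left_deriv f x D \<longleftrightarrow> ((\<lambda>h. (f (x + h) - f x) / h) \<longlongrightarrow> D) (at_left 0)"

definition rderiv :: "(real \<Rightarrow> real) \<Rightarrow> real \<Rightarrow> real" where
  "rderiv f x = Lim (at_right 0) (\<lambda>h. (f (x + h) - f x) / h)"

definition lderiv :: "(real \<Rightarrow> real) \<Rightarrow> real \<Rightarrow> real" where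
  "lderiv f x = Lim (at_left 0) (\<lambda>h. (f (x + h) - f x) / h)"

definition cost_assms :: "nat \<Rightarrow> (nat \<Rightarrow> real \<Rightarrow> real) \<Rightarrow> bool" where
  "cost_assms N C \<longleftrightarrow> (\<forall>n<N.
      convex_on {0..} (C n) \<and> continuous_on {0..} (C n) \<and> mono_on {0..} (C n) \<and>
      (\<forall>x>0. C n differentiable (at x)) \<and> continuous_on {0<..} (deriv (C n)) \<and>
      C n 0 = 0)"

definition demand_assms :: "(real \<Rightarrow> real) \<Rightarrow> bool" where
  "demand_assms p \<longleftrightarrow> continuous_on {0..} p \<and> (\<forall>q\<ge>0. p q \<ge> 0) \<and>
      (\<forall>a b. 0 \<le> a \<longrightarrow> a \<le> b \<longrightarrow> p b \<le> p a) \<and> p 0 > 0 \<and>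
      (\<exists>D. has_right_deriv p 0 D) \<and>
      (\<forall>q>0. (\<exists>D. has_left_deriv p q D) \<and> (\<exists>D. has_right_deriv p q D))"

text \<open>Marginal cost C_n'(x): derivative for x>0, right derivative at 0
  (the right derivative coincides with the derivative for x>0).\<close>
definition mc :: "(nat \<Rightarrow> real \<Rightarrow> real) \<Rightarrow> nat \<Rightarrow> real \<Rightarrow> real" where
  "mc C n x = rderiv (C n) x"

definition min_mc0 :: "nat \<Rightarrow> (nat \<Rightarrow> real \<Rightarrow> real) \<Rightarrow> real" where
  "min_mc0 N C = Min ((\<lambda>n. mc C n 0) ` {..<N})"

definition total :: "nat \<Rightarrow> (nat \<Rightarrow> real) \<Rightarrow> real" where
  "total N x = (\<Sum>n<N. x n)"

definition nonneg_prof :: "nat \<Rightarrow> (nat \<Rightarrow> real) \<Rightarrow> bool" where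
  "nonneg_prof N x \<longleftrightarrow> (\<forall>n<N. x n \<ge> 0)"

definition welfare :: "nat \<Rightarrow> (real \<Rightarrow> real) \<Rightarrow> (nat \<Rightarrow> real \<Rightarrow> real) \<Rightarrow> (nat \<Rightarrow> real) \<Rightarrow> real" where
  "welfare N p C x = integral {0..total N x} p - (\<Sum>n<N. C n (x n))"

definition social_optimum :: "nat \<Rightarrow> (real \<Rightarrow> real) \<Rightarrow> (nat \<Rightarrow> real \<Rightarrow> real) \<Rightarrow> (nat \<Rightarrow> real) \<Rightarrow> bool" where
  "social_optimum N p C xS \<longleftrightarrow> nonneg_prof N xS \<and>
     (\<forall>y. nonneg_prof N y \<longrightarrow> welfare N p C y \<le> welfare N p C xS)"

definition efficiency :: "nat \<Rightarrow> (real \<Rightarrow> real) \<Rightarrow> (nat \<Rightarrow> real \<Rightarrow> real) \<Rightarrow> (nat \<Rightarrow> real) \<Rightarrow> (nat \<Rightarrow> real) \<Rightarrow> real" where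
  "efficiency N p C xS x = welfare N p C x / welfare N p C xS"

definition cournot_candidate :: "nat \<Rightarrow> (real \<Rightarrow> real) \<Rightarrow> (nat \<Rightarrow> real \<Rightarrow> real) \<Rightarrow> (nat \<Rightarrow> real) \<Rightarrow> bool" where
  "cournot_candidate N p C x \<longleftrightarrow> nonneg_prof N x \<and>
     (\<forall>n<N. (x n > 0 \<longrightarrow> mc C n (x n) \<le> p (total N x) + x n * lderiv p (total N x)) \<and>
            mc C n (x n) \<ge> p (total N x) + x n * rderiv p (total N x))"

end

theory Submission imports Defs begin

(* (1) Convex nondecreasing functions on [0,oo): monotone chord slopes, the
       right difference quotient converges to rderiv, the supporting-line
       inequality and monotonicity of rderiv.
   (2) The nonincreasing inverse demand: flatness between points of equal
       price, integral bounds, one-sided derivatives (DL <= DR <= 0).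
   (3) Welfare: raising one supplier's output, the first-order condition
       p(X^S) <= C_n'(x^S_n) of an optimum, and positivity of optimal welfare.
   (4) Cournot candidates: some supplier is active; if the left derivative
       of p at X were negative, every active supplier would produce less
       than at the optimum, so X < X^S and p is flat right of X, which forces
       both one-sided derivatives to vanish.  With zero derivatives the
       candidate conditions give C_n'(x_n) = p(X) for active suppliers and
       C_n'(0) >= p(X) otherwise; the supporting-line inequality then yields
       W(x^S) <= W(x).
   The theorem combines (4) with W(x) <= W(x^S) and W(x^S) > 0. *)

section \<open>Convex nondecreasing functions on the half-line\<close>

lemma slope_mono:
  fixes f :: "real \<Rightarrow> real"
  assumes cf: "convex_on {0..} f" and "0 \<le> a" "a < b" "a \<le> c" "c < d" "b \<le> d"
  shows "(f b - f a) / (b - a) \<le> (f d - f c) / (d - c)"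
proof -
  have left: "(f b - f a) / (b - a) \<le> (f d - f a) / (d - a)"
  proof (cases "b = d")
    case False
    then have "(f a - f b) / (a - b) \<le> (f a - f d) / (a - d)"
      using convex_on_slope_le(1)[OF cf, of a d b] assms by auto
    then show ?thesis by (smt (verit) minus_divide_divide minus_diff_eq)
  qed simp
  have right: "(f d - f a) / (d - a) \<le> (f d - f c) / (d - c)"
  proof (cases "a = c")
    case False
    then have "(f a - f d) / (a - d) \<le> (f c - f d) / (c - d)"
      using convex_on_slope_le(2)[OF cf, of a d c] assms by auto
    then show ?thesis by (smt (verit) minus_divide_divide minus_diff_eq)
  qed simp
  from left right show ?thesis by linarith
qed

text \<open>For a convex nondecreasing function the right difference quotients decrease as
  the step shrinks and are nonnegative; hence they converge, to rderiv by definition.\<close>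
lemma convex_right_quotient_tendsto:
  fixes f :: "real \<Rightarrow> real"
  assumes cf: "convex_on {0..} f" and mf: "mono_on {0..} f" and x: "0 \<le> x"
  shows "((\<lambda>h. (f (x + h) - f x) / h) \<longlongrightarrow> rderiv f x) (at_right 0)"
proof -
  let ?q = "\<lambda>h. (f (x + h) - f x) / h"
  have "(?q \<longlongrightarrow> Inf (?q ` ({0<..} \<inter> UNIV))) (at 0 within ({0<..} \<inter> UNIV))"
  proof (rule Lim_right_bound[where K=0])
    fix a b :: real assume "0 < a" "a \<le> b"
    then show "?q a \<le> ?q b"
      using slope_mono[OF cf, of x "x+a" x "x+b"] x by (cases "a = b") auto
  next
    fix a :: real assume "0 < a"
    then have "f x \<le> f (x + a)" using mf x by (auto simp: mono_on_def)
    then show "0 \<le> ?q a" using \<open>0 < a\<close> by simp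
  qed
  then have lim: "(?q \<longlongrightarrow> Inf (?q ` {0<..})) (at_right 0)" by simp
  then have "rderiv f x = Inf (?q ` {0<..})"
    unfolding rderiv_def by (rule tendsto_Lim[rotated]) simp
  with lim show ?thesis by simp
qed

lemma convex_support:
  fixes f :: "real \<Rightarrow> real"
  assumes cf: "convex_on {0..} f" and mf: "mono_on {0..} f" and x: "0 \<le> x" and y: "0 \<le> y"
  shows "rderiv f x * (y - x) \<le> f y - f x"
proof (cases x y rule: linorder_cases)
  case less
  have "rderiv f x \<le> (f y - f x) / (y - x)"
  proof (rule tendsto_upperbound[OF convex_right_quotient_tendsto[OF cf mf x]])
    show "\<forall>\<^sub>F h in at_right 0. (f (x + h) - f x) / h \<le> (f y - f x) / (y - x)"
      unfolding eventually_at_right_field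
    proof (intro exI[of _ "y - x"] conjI allI impI)
      fix h :: real assume "0 < h" "h < y - x"
      then show "(f (x + h) - f x) / h \<le> (f y - f x) / (y - x)"
        using slope_mono[OF cf, of x "x+h" x y] x by auto
    qed (use less in auto)
  qed simp
  then show ?thesis using less by (simp add: le_divide_eq)
next
  case greater
  have "(f x - f y) / (x - y) \<le> rderiv f x"
  proof (rule tendsto_lowerbound[OF convex_right_quotient_tendsto[OF cf mf x]])
    show "\<forall>\<^sub>F h in at_right 0. (f x - f y) / (x - y) \<le> (f (x + h) - f x) / h"
      unfolding eventually_at_right_field
    proof (intro exI[of _ 1] conjI allI impI)
      fix h :: real assume "0 < h" "h < 1"
      then show "(f x - f y) / (x - y) \<le> (f (x + h) - f x) / h"
        using slope_mono[OF cf, of y x x "x+h"] y greater by auto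
    qed auto
  qed simp
  then have "f x - f y \<le> rderiv f x * (x - y)" using greater by (simp add: divide_le_eq)
  then show ?thesis by (simp add: algebra_simps)
qed simp

lemma convex_rderiv_mono:
  fixes f :: "real \<Rightarrow> real"
  assumes cf: "convex_on {0..} f" and mf: "mono_on {0..} f" and "0 \<le> a" "a \<le> b"
  shows "rderiv f a \<le> rderiv f b"
proof (cases "a = b")
  case False
  have "rderiv f a * (b - a) \<le> f b - f a"
    using convex_support[OF cf mf, of a b] assms by simp
  also have "\<dots> \<le> rderiv f b * (b - a)"
    using convex_support[OF cf mf, of b a] assms by (simp add: algebra_simps)
  finally show ?thesis using False assms by simp
qed simp

section \<open>The inverse demand\<close>

lemma demand_assmsD:
  assumes "demand_assms p"
  shows demand_continuous: "continuous_on {0..} p"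
    and demand_antimono: "antimono_on {0..} p"
  using assms by (auto simp: demand_assms_def monotone_on_def)

lemma antimono_flat_between:
  fixes p :: "real \<Rightarrow> real"
  assumes anti: "antimono_on {0..} p"
    and "0 \<le> a" "a \<le> t" "t \<le> b" "p a = p b"
  shows "p t = p a"
proof -
  have "p t \<le> p a" using monotone_onD[OF anti, of a t] assms(2,3) by simp
  moreover have "p b \<le> p t" using monotone_onD[OF anti, of t b] assms(2-4) by simp
  ultimately show ?thesis using assms(5) by simp
qed

lemma continuous_on_right_shift:
  fixes p :: "real \<Rightarrow> real"
  assumes "continuous_on {0..} p" "0 \<le> a"
  shows "((\<lambda>t. p (a + t)) \<longlongrightarrow> p a) (at_right 0)"
proof -
  have "(p \<longlongrightarrow> p a) (at a within {0..})" using assms by (simp add: continuous_on_def)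
  then have "(p \<longlongrightarrow> p a) (at_right a)"
    by (rule tendsto_within_subset) (use assms in auto)
  then have "filterlim p (nhds (p a)) (filtermap (\<lambda>x. x + a) (at_right 0))"
    by (simp add: at_right_to_0[symmetric])
  then show ?thesis by (simp add: filterlim_filtermap add.commute)
qed

lemma integral_split_at:
  fixes p :: "real \<Rightarrow> real"
  assumes "continuous_on {0..} p" "0 \<le> a" "a \<le> b"
  shows "integral {0..b} p = integral {0..a} p + integral {a..b} p"
proof -
  have "p integrable_on {0..b}"
    by (rule integrable_continuous_interval, rule continuous_on_subset[OF assms(1)]) auto
  with assms show ?thesis by (simp add: Henstock_Kurzweil_Integration.integral_combine)
qed

lemma integral_ge_right_price:
  fixes p :: "real \<Rightarrow> real"
  assumes cont: "continuous_on {0..} p" and anti: "antimono_on {0..} p"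
    and "0 \<le> a" "a \<le> b"
  shows "(b - a) * p b \<le> integral {a..b} p"
proof -
  have "p integrable_on {a..b}"
    by (rule integrable_continuous_interval, rule continuous_on_subset[OF cont]) (use assms in auto)
  moreover have "p b \<le> p t" if "t \<in> {a..b}" for t
    using monotone_onD[OF anti, of t b] that assms by simp
  ultimately have "integral {a..b} (\<lambda>_. p b) \<le> integral {a..b} p"
    by (intro integral_le) auto
  then show ?thesis using assms by simp
qed

lemma integral_flat_increment:
  fixes p :: "real \<Rightarrow> real"
  assumes cont: "continuous_on {0..} p" and "0 \<le> a" "a \<le> b"
    and flat: "\<And>t. a \<le> t \<Longrightarrow> t \<le> b \<Longrightarrow> p t = c"
  shows "integral {0..b} p - integral {0..a} p = (b - a) * c"
proof -
  have "integral {a..b} p = integral {a..b} (\<lambda>_. c)"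
    by (rule integral_cong) (use flat in auto)
  then show ?thesis using integral_split_at[OF assms(1-3)] assms(3) by simp
qed

lemma lderiv_eq: "has_left_deriv f x D \<Longrightarrow> lderiv f x = D"
  unfolding has_left_deriv_def lderiv_def by (rule tendsto_Lim) simp

lemma rderiv_eq: "has_right_deriv f x D \<Longrightarrow> rderiv f x = D"
  unfolding has_right_deriv_def rderiv_def by (rule tendsto_Lim) simp

lemma one_sided_derivs_imp_deriv:
  assumes "has_left_deriv f x D" "has_right_deriv f x D"
  shows "(f has_real_derivative D) (at x)"
  using assms unfolding DERIV_def filterlim_at_split has_left_deriv_def has_right_deriv_def
  by simp

lemma convex_antimono_one_sided_derivs:
  fixes p :: "real \<Rightarrow> real"
  assumes cvx: "convex_on {0..} p" and anti: "antimono_on {0..} p"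
    and X: "0 < X" and DL: "has_left_deriv p X DL" and DR: "has_right_deriv p X DR"
  shows "DL \<le> DR" and "DR \<le> 0"
proof -
  have DLt: "((\<lambda>h. (p (X + h) - p X) / h) \<longlongrightarrow> DL) (at_left 0)"
    using DL by (simp add: has_left_deriv_def)
  have DRt: "((\<lambda>h. (p (X + h) - p X) / h) \<longlongrightarrow> DR) (at_right 0)"
    using DR by (simp add: has_right_deriv_def)
  show "DR \<le> 0"
  proof (rule tendsto_upperbound[OF DRt])
    show "\<forall>\<^sub>F h in at_right 0. (p (X + h) - p X) / h \<le> 0"
      unfolding eventually_at_right_field
    proof (intro exI[of _ 1] conjI allI impI)
      fix h :: real assume "0 < h" "h < 1"
      then have "p (X + h) \<le> p X" using monotone_onD[OF anti, of X "X+h"] X by simp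
      then show "(p (X + h) - p X) / h \<le> 0" using \<open>0 < h\<close> by (simp add: divide_le_0_iff)
    qed simp
  qed simp
  have DL_le_quot: "DL \<le> (p (X + k) - p X) / k" if k: "0 < k" for k
  proof (rule tendsto_upperbound[OF DLt])
    show "\<forall>\<^sub>F h in at_left 0. (p (X + h) - p X) / h \<le> (p (X + k) - p X) / k"
      unfolding eventually_at_left_field
    proof (intro exI[of _ "-X"] conjI allI impI)
      fix h :: real assume h: "-X < h" "h < 0"
      have "(p X - p (X + h)) / (X - (X + h)) \<le> (p (X + k) - p X) / ((X + k) - X)"
        by (rule slope_mono[OF cvx]) (use h k in auto)
      moreover have "(p X - p (X + h)) / (X - (X + h)) = (p (X + h) - p X) / h"
        by (smt (verit) minus_divide_divide minus_diff_eq)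
      ultimately show "(p (X + h) - p X) / h \<le> (p (X + k) - p X) / k" by simp
    qed (use X in auto)
  qed simp
  have "\<forall>\<^sub>F k in at_right 0. DL \<le> (p (X + k) - p X) / k"
    using eventually_at_right_less[of "0::real"] by eventually_elim (rule DL_le_quot)
  then show "DL \<le> DR" by (rule tendsto_lowerbound[OF DRt]) simp
qed

lemma right_deriv_flat:
  fixes p :: "real \<Rightarrow> real"
  assumes DR: "has_right_deriv p X DR" and "0 < \<delta>"
    and flat: "\<And>t. X \<le> t \<Longrightarrow> t \<le> X + \<delta> \<Longrightarrow> p t = p X"
  shows "DR = 0"
proof -
  have "\<forall>\<^sub>F h in at_right 0. (p (X + h) - p X) / h = 0"
    unfolding eventually_at_right_field
  proof (intro exI[of _ \<delta>] conjI allI impI)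
    fix h :: real assume "0 < h" "h < \<delta>"
    then show "(p (X + h) - p X) / h = 0" using flat[of "X + h"] by simp
  qed (use \<open>0 < \<delta>\<close> in simp)
  then have "((\<lambda>h. (p (X + h) - p X) / h) \<longlongrightarrow> 0) (at_right 0)"
    by (rule tendsto_eventually)
  with DR show ?thesis
    unfolding has_right_deriv_def by (intro tendsto_unique[of "at_right 0"]) auto
qed

section \<open>Welfare and the social optimum\<close>

lemma cost_assmsD:
  assumes "cost_assms N C" "n < N"
  shows cost_convex: "convex_on {0..} (C n)" and cost_mono: "mono_on {0..} (C n)"
    and cost_zero: "C n 0 = 0"
  using assms by (auto simp: cost_assms_def)

lemma total_nonneg: "nonneg_prof N y \<Longrightarrow> 0 \<le> total N y"
  unfolding nonneg_prof_def total_def by (rule sum_nonneg) simp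

lemma sum_fun_upd:
  fixes h :: "'a \<Rightarrow> 'b \<Rightarrow> 'c::ab_group_add"
  assumes "finite A" "n \<in> A"
  shows "(\<Sum>m\<in>A. h m ((f(n := v)) m)) = (\<Sum>m\<in>A. h m (f m)) - h n (f n) + h n v"
proof -
  have "(\<Sum>m\<in>A. h m ((f(n := v)) m)) = h n v + (\<Sum>m\<in>A-{n}. h m ((f(n := v)) m))"
    using assms by (simp add: sum.remove)
  also have "(\<Sum>m\<in>A-{n}. h m ((f(n := v)) m)) = (\<Sum>m\<in>A-{n}. h m (f m))"
    by (rule sum.cong) auto
  also have "\<dots> = (\<Sum>m\<in>A. h m (f m)) - h n (f n)"
    using assms by (simp add: sum.remove)
  finally show ?thesis by simp
qed

lemma welfare_raise_one:
  fixes p :: "real \<Rightarrow> real" and y :: "nat \<Rightarrow> real"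
  assumes cont: "continuous_on {0..} p" and y: "nonneg_prof N y" and n: "n < N" and t: "0 \<le> t"
  shows "welfare N p C (y(n := y n + t)) =
    welfare N p C y + integral {total N y..total N y + t} p - (C n (y n + t) - C n (y n))"
proof -
  have total: "total N (y(n := y n + t)) = total N y + t"
    unfolding total_def using sum_fun_upd[of "{..<N}" n "\<lambda>m v. v" y "y n + t"] n by simp
  have cost: "(\<Sum>m<N. C m ((y(n := y n + t)) m)) = (\<Sum>m<N. C m (y m)) - C n (y n) + C n (y n + t)"
    using sum_fun_upd[of "{..<N}" n C y "y n + t"] n by simp
  have "integral {0..total N y + t} p =
      integral {0..total N y} p + integral {total N y..total N y + t} p"
    by (rule integral_split_at[OF cont]) (use total_nonneg[OF y] t in auto)
  then show ?thesis unfolding welfare_def total cost by simp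
qed

text \<open>First-order condition of a social optimum: no supplier gains from producing a
  little more, i.e. the price p(X^S) never exceeds a marginal cost C_n'(x^S_n).\<close>
lemma social_optimum_foc:
  assumes A1: "cost_assms N C" and A2: "demand_assms p"
    and opt: "social_optimum N p C xS" and n: "n < N"
  shows "p (total N xS) \<le> mc C n (xS n)"
proof -
  define XS where "XS = total N xS"
  have xS: "nonneg_prof N xS" using opt by (simp add: social_optimum_def)
  have XS0: "0 \<le> XS" using total_nonneg[OF xS] by (simp add: XS_def)
  have quot: "p (XS + t) \<le> (C n (xS n + t) - C n (xS n)) / t" if t: "0 < t" for t
  proof -
    have "nonneg_prof N (xS(n := xS n + t))" using xS t by (auto simp: nonneg_prof_def)
    then have "welfare N p C (xS(n := xS n + t)) \<le> welfare N p C xS"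
      using opt by (simp add: social_optimum_def)
    then have "integral {XS..XS + t} p \<le> C n (xS n + t) - C n (xS n)"
      using welfare_raise_one[OF demand_continuous[OF A2] xS n, of t] t by (simp add: XS_def)
    moreover have "t * p (XS + t) \<le> integral {XS..XS + t} p"
      using integral_ge_right_price[OF demand_continuous[OF A2] demand_antimono[OF A2], of XS "XS + t"]
        XS0 t by simp
    ultimately show ?thesis using t by (simp add: le_divide_eq mult.commute)
  qed
  have mc_lim: "((\<lambda>t. (C n (xS n + t) - C n (xS n)) / t) \<longlongrightarrow> mc C n (xS n)) (at_right 0)"
    unfolding mc_def using xS n
    by (intro convex_right_quotient_tendsto[OF cost_convex[OF A1 n] cost_mono[OF A1 n]])
      (simp add: nonneg_prof_def)
  have below: "\<forall>\<^sub>F t in at_right 0. p (XS + t) \<le> (C n (xS n + t) - C n (xS n)) / t"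
    using eventually_at_right_less[of "0::real"] by eventually_elim (rule quot)
  have "p XS \<le> mc C n (xS n)"
    using tendsto_le[OF _ mc_lim continuous_on_right_shift[OF demand_continuous[OF A2] XS0] below]
    by simp
  then show ?thesis by (simp add: XS_def)
qed

lemma cheap_supplier:
  assumes "N \<ge> 1" "min_mc0 N C < p 0"
  shows "\<exists>n<N. mc C n 0 < p 0"
proof -
  have "min_mc0 N C \<in> (\<lambda>n. mc C n 0) ` {..<N}"
    unfolding min_mc0_def using assms(1) by (intro Min_in) (auto simp: lessThan_empty_iff)
  with assms(2) show ?thesis by auto
qed

text \<open>A cheap supplier producing a small quantity alone yields positive welfare, so the
  optimal welfare is positive and the efficiency ratio is well defined.\<close>
lemma social_optimum_welfare_pos:
  assumes N: "N \<ge> 1" and A1: "cost_assms N C" and A2: "demand_assms p"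
    and A4: "p 0 > min_mc0 N C" and opt: "social_optimum N p C xS"
  shows "0 < welfare N p C xS"
proof -
  obtain n where n: "n < N" "mc C n 0 < p 0" using cheap_supplier[where C=C and p=p, OF N A4] by blast
  have "((\<lambda>h. C n h / h) \<longlongrightarrow> mc C n 0) (at_right 0)"
    using convex_right_quotient_tendsto[OF cost_convex[OF A1 n(1)] cost_mono[OF A1 n(1)], of 0]
      cost_zero[OF A1 n(1)] by (simp add: mc_def)
  then have "((\<lambda>h. p h - C n h / h) \<longlongrightarrow> p 0 - mc C n 0) (at_right 0)"
    using tendsto_diff[OF continuous_on_right_shift[OF demand_continuous[OF A2], of 0]] by simp
  then have "\<forall>\<^sub>F h in at_right 0. 0 < p h - C n h / h"
    using n(2) by (intro order_tendstoD(1)) auto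
  then have "\<forall>\<^sub>F h in at_right 0. 0 < h \<and> 0 < p h - C n h / h"
    using eventually_at_right_less[of "0::real"] by eventually_elim simp
  then obtain h where h: "0 < h" "C n h < h * p h"
    using eventually_happens'[OF trivial_limit_at_right_real] by (force simp: field_simps)
  define zero :: "nat \<Rightarrow> real" where "zero = (\<lambda>_. 0)"
  have zero_prof: "nonneg_prof N zero" by (simp add: zero_def nonneg_prof_def)
  have "welfare N p C zero = 0"
    using cost_zero[OF A1] by (simp add: zero_def welfare_def total_def)
  then have "welfare N p C (zero(n := zero n + h)) = integral {0..h} p - C n h"
    using welfare_raise_one[OF demand_continuous[OF A2] zero_prof n(1), of h] h cost_zero[OF A1 n(1)]
    by (simp add: zero_def total_def)
  moreover have "h * p h \<le> integral {0..h} p"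
    using integral_ge_right_price[OF demand_continuous[OF A2] demand_antimono[OF A2], of 0 h] h by simp
  moreover have "nonneg_prof N (zero(n := zero n + h))" using h by (simp add: zero_def nonneg_prof_def)
  then have "welfare N p C (zero(n := zero n + h)) \<le> welfare N p C xS"
    using opt by (simp add: social_optimum_def)
  ultimately show ?thesis using h by simp
qed

section \<open>Cournot candidates\<close>

text \<open>By Assumption 4 a Cournot candidate cannot be the zero profile: the cheap supplier
  would violate its candidate condition C_n'(0) >= p(0).\<close>
lemma candidate_active_supplier:
  assumes N: "N \<ge> 1" and A4: "p 0 > min_mc0 N C" and cand: "cournot_candidate N p C x"
  shows "\<exists>n<N. 0 < x n"
proof (rule ccontr)
  assume "\<not> ?thesis"
  then have zero: "x m = 0" if "m < N" for m
    using cand that by (force simp: cournot_candidate_def nonneg_prof_def)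
  then have "total N x = 0" by (simp add: total_def)
  obtain n where n: "n < N" "mc C n 0 < p 0" using cheap_supplier[where C=C and p=p, OF N A4] by blast
  have "p 0 \<le> mc C n 0"
    using cand n(1) zero[OF n(1)] \<open>total N x = 0\<close> by (auto simp: cournot_candidate_def)
  with n(2) show False by simp
qed

text \<open>Hence the candidate's total output X is positive, an interior point of the domain of p.\<close>
lemma candidate_total_pos:
  assumes N: "N \<ge> 1" and A4: "p 0 > min_mc0 N C" and cand: "cournot_candidate N p C x"
  shows "0 < total N x"
proof -
  obtain n where n: "n < N" "0 < x n" using candidate_active_supplier[OF N A4 cand] by blast
  have "x n \<le> total N x" unfolding total_def
    by (rule member_le_sum) (use n cand in \<open>auto simp: cournot_candidate_def nonneg_prof_def\<close>)
  with n show ?thesis by simp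
qed

text \<open>If the left derivative of p at X is negative, an active supplier's marginal cost
  is strictly below the common price p(X) = p(X^S), whereas at the optimum marginal
  costs are at least that price; monotone marginal costs force x_n < x^S_n.\<close>
lemma candidate_active_below_optimum:
  assumes A1: "cost_assms N C" and A2: "demand_assms p"
    and cand: "cournot_candidate N p C x" and opt: "social_optimum N p C xS"
    and eq: "p (total N x) = p (total N xS)" and neg: "lderiv p (total N x) < 0"
    and n: "n < N" "0 < x n"
  shows "x n < xS n"
proof (rule ccontr)
  assume "\<not> x n < xS n"
  moreover have "0 \<le> xS n" using opt n(1) by (simp add: social_optimum_def nonneg_prof_def)
  ultimately have mc_mono: "mc C n (xS n) \<le> mc C n (x n)"
    unfolding mc_def by (intro convex_rderiv_mono[OF cost_convex[OF A1 n(1)] cost_mono[OF A1 n(1)]]) simp_all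
  have "mc C n (x n) \<le> p (total N x) + x n * lderiv p (total N x)"
    using cand n by (simp add: cournot_candidate_def)
  also have "\<dots> < p (total N xS)" using eq neg n(2) by (simp add: mult_pos_neg)
  also have "\<dots> \<le> mc C n (xS n)" by (rule social_optimum_foc[OF A1 A2 opt n(1)])
  finally show False using mc_mono by simp
qed

lemma candidate_total_below_optimum:
  assumes N: "N \<ge> 1" and A1: "cost_assms N C" and A2: "demand_assms p"
    and A4: "p 0 > min_mc0 N C" and cand: "cournot_candidate N p C x"
    and opt: "social_optimum N p C xS"
    and eq: "p (total N x) = p (total N xS)" and neg: "lderiv p (total N x) < 0"
  shows "total N x < total N xS"
  unfolding total_def
proof (rule sum_strict_mono_ex1)
  note below = candidate_active_below_optimum[OF A1 A2 cand opt eq neg]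
  show "\<forall>m\<in>{..<N}. x m \<le> xS m"
  proof
    fix m assume m: "m \<in> {..<N}"
    then have "0 \<le> x m" "0 \<le> xS m"
      using cand opt by (auto simp: cournot_candidate_def social_optimum_def nonneg_prof_def)
    with m below[of m] show "x m \<le> xS m" by (cases "x m = 0") auto
  qed
  show "\<exists>m\<in>{..<N}. x m < xS m"
    using candidate_active_supplier[OF N A4 cand] below by blast
qed simp

text \<open>If X < X^S,
  p is constant on [X, X^S], so the right derivative vanishes, and an active supplier's
  candidate conditions force DL >= 0; otherwise DL >= 0 by the previous lemma.  Together
  with DL <= DR <= 0 both one-sided derivatives vanish.\<close>
lemma candidate_price_flat:
  assumes N: "N \<ge> 1" and A1: "cost_assms N C" and A2: "demand_assms p"
    and A4: "p 0 > min_mc0 N C" and cvx: "convex_on {0..} p"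
    and cand: "cournot_candidate N p C x" and opt: "social_optimum N p C xS"
    and eq: "p (total N x) = p (total N xS)"
  shows "has_left_deriv p (total N x) 0" and "has_right_deriv p (total N x) 0"
proof -
  define X where "X = total N x"
  have X: "0 < X" using candidate_total_pos[OF N A4 cand] by (simp add: X_def)
  obtain DL DR where DL: "has_left_deriv p X DL" and DR: "has_right_deriv p X DR"
    using A2 X by (auto simp: demand_assms_def)
  note one_sided = convex_antimono_one_sided_derivs[OF cvx demand_antimono[OF A2] X DL DR]
  have "0 \<le> DL"
  proof (cases "X < total N xS")
    case True
    have "DR = 0"
    proof (rule right_deriv_flat[OF DR])
      show "0 < total N xS - X" using True by simp
      fix t assume "X \<le> t" "t \<le> X + (total N xS - X)"
      then show "p t = p X"
        using antimono_flat_between[OF demand_antimono[OF A2], of X t "total N xS"] X eq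
        by (simp add: X_def)
    qed
    obtain n where n: "n < N" "0 < x n" using candidate_active_supplier[OF N A4 cand] by blast
    have "p X \<le> mc C n (x n)" and "mc C n (x n) \<le> p X + x n * DL"
      using cand n rderiv_eq[OF DR] lderiv_eq[OF DL] \<open>DR = 0\<close>
      by (auto simp: cournot_candidate_def X_def)
    then have "0 \<le> x n * DL" by simp
    with n(2) show ?thesis by (simp add: zero_le_mult_iff)
  next
    case False
    then show ?thesis
      using candidate_total_below_optimum[OF N A1 A2 A4 cand opt eq] lderiv_eq[OF DL]
      by (force simp: X_def)
  qed
  with one_sided have "DL = 0" "DR = 0" by simp_all
  with DL DR show "has_left_deriv p (total N x) 0" "has_right_deriv p (total N x) 0"
    by (simp_all add: X_def)
qed

text \<open>With p flat at X, the candidate conditions say C_n'(x_n) = p(X) for active suppliers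
  and C_n'(0) >= p(X) otherwise, so x minimises total cost minus revenue at the price p(X):
  by the supporting-line inequality, any other profile y costs at least p(X) times its
  extra output.\<close>
lemma flat_candidate_cost_minimal:
  assumes A1: "cost_assms N C" and cand: "cournot_candidate N p C x"
    and L: "lderiv p (total N x) = 0" and R: "rderiv p (total N x) = 0"
    and y: "nonneg_prof N y"
  shows "p (total N x) * (total N y - total N x) \<le> (\<Sum>m<N. C m (y m)) - (\<Sum>m<N. C m (x m))"
proof -
  define P where "P = p (total N x)"
  have step: "P * (y n - x n) \<le> C n (y n) - C n (x n)" if n: "n < N" for n
  proof -
    have x0: "0 \<le> x n" and y0: "0 \<le> y n"
      using cand y n by (auto simp: cournot_candidate_def nonneg_prof_def)
    have support: "mc C n (x n) * (y n - x n) \<le> C n (y n) - C n (x n)"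
      unfolding mc_def by (rule convex_support[OF cost_convex[OF A1 n] cost_mono[OF A1 n] x0 y0])
    show ?thesis
    proof (cases "x n \<le> y n")
      case True
      have "P \<le> mc C n (x n)" using cand n R by (simp add: cournot_candidate_def P_def)
      then have "P * (y n - x n) \<le> mc C n (x n) * (y n - x n)"
        using True by (simp add: mult_right_mono)
      with support show ?thesis by simp
    next
      case False
      then have "mc C n (x n) \<le> P" using cand n L y0 by (simp add: cournot_candidate_def P_def)
      then have "P * (y n - x n) \<le> mc C n (x n) * (y n - x n)"
        using False by (simp add: mult_right_mono_neg)
      with support show ?thesis by simp
    qed
  qed
  have "P * (total N y - total N x) = (\<Sum>m<N. P * (y m - x m))"
    by (simp add: total_def sum_distrib_left sum_subtractf right_diff_distrib)
  also have "\<dots> \<le> (\<Sum>m<N. C m (y m) - C m (x m))" by (rule sum_mono) (simp add: step)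
  also have "\<dots> = (\<Sum>m<N. C m (y m)) - (\<Sum>m<N. C m (x m))" by (simp add: sum_subtractf)
  finally show ?thesis by (simp add: P_def)
qed

text \<open>Between X and any total output with the same price p is constant, so the consumer
  value changes by exactly p(X) times the change in output; with the previous lemma the
  candidate's welfare is at least that of any profile with the same price.\<close>
lemma flat_candidate_welfare_ge:
  assumes A1: "cost_assms N C" and A2: "demand_assms p" and cand: "cournot_candidate N p C x"
    and L: "lderiv p (total N x) = 0" and R: "rderiv p (total N x) = 0"
    and y: "nonneg_prof N y" and eq: "p (total N x) = p (total N y)"
  shows "welfare N p C y \<le> welfare N p C x"
proof -
  define X Y where "X = total N x" and "Y = total N y"
  have X0: "0 \<le> X" and Y0: "0 \<le> Y"
    using total_nonneg y cand by (auto simp: X_def Y_def cournot_candidate_def)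
  have flat: "p t = p X" if "min X Y \<le> t" "t \<le> max X Y" for t
    using antimono_flat_between[OF demand_antimono[OF A2], of "min X Y" t "max X Y"] that X0 Y0 eq
    by (auto simp: X_def Y_def min_def max_def split: if_splits)
  have "integral {0..Y} p - integral {0..X} p = (Y - X) * p X"
  proof (cases "X \<le> Y")
    case True
    show ?thesis
    proof (rule integral_flat_increment[OF demand_continuous[OF A2] X0 True])
      show "p t = p X" if "X \<le> t" "t \<le> Y" for t using that True by (intro flat) auto
    qed
  next
    case False
    have "integral {0..X} p - integral {0..Y} p = (X - Y) * p X"
    proof (rule integral_flat_increment[OF demand_continuous[OF A2] Y0])
      show "Y \<le> X" using False by simp
      show "p t = p X" if "Y \<le> t" "t \<le> X" for t using that False by (intro flat) auto
    qed
    then show ?thesis by (simp add: algebra_simps)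
  qed
  with flat_candidate_cost_minimal[OF A1 cand L R y] show ?thesis
    unfolding welfare_def X_def Y_def by (simp add: algebra_simps)
qed

theorem proposition8:
  fixes N :: nat and p :: "real \<Rightarrow> real" and C :: "nat \<Rightarrow> real \<Rightarrow> real"
    and x xS :: "nat \<Rightarrow> real"
  assumes N: "N \<ge> 1"
    and A1: "cost_assms N C"
    and A2: "demand_assms p"
    and A3: "\<exists>R>0. p R \<le> min_mc0 N C"
    and A4: "p 0 > min_mc0 N C"
    and cvx: "convex_on {0..} p"
    and cand: "cournot_candidate N p C x"
    and opt: "social_optimum N p C xS"
    and eq: "p (total N x) = p (total N xS)"
  shows "(p has_real_derivative 0) (at (total N x)) \<and> efficiency N p C xS x = 1"
proof -
  note flat = candidate_price_flat[OF N A1 A2 A4 cvx cand opt eq]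
  have deriv: "(p has_real_derivative 0) (at (total N x))"
    by (rule one_sided_derivs_imp_deriv[OF flat])
  have xS: "nonneg_prof N xS" using opt by (simp add: social_optimum_def)
  have "welfare N p C xS \<le> welfare N p C x"
    using flat_candidate_welfare_ge[OF A1 A2 cand lderiv_eq[OF flat(1)] rderiv_eq[OF flat(2)] xS eq] .
  moreover have "welfare N p C x \<le> welfare N p C xS"
    using opt cand by (simp add: social_optimum_def cournot_candidate_def)
  moreover have "0 < welfare N p C xS"
    by (rule social_optimum_welfare_pos[OF N A1 A2 A4 opt])
  ultimately have "efficiency N p C xS x = 1" by (simp add: efficiency_def)
  with deriv show ?thesis by simp
qed

end
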